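(* Let $k$ be algebraically closed of characteristic $p$, $C\subset\mathbb P^2$ the Fermat curve $X_1^{p+1}+X_2^{p+1}+X_3^{p+1}=0$, and $t=(t_1,t_2,t_3)^T$ representing a point of $C^0(k):=C(k)\setminus C(\mathbb F_{p^2})$. Then the $\mathbb F_{p^2}$-algebra $\mathrm{End}(t)=\{A\in\mathrm{Mat}_3(\mathbb F_{p^2}):A\cdot t\in k\cdot t\}$ is isomorphic to either $\mathbb F_{p^2}$ or $\mathbb F_{p^6}$. *)

theory Defs
  imports "HOL-Analysis.Analysis" "HOL-Computational_Algebra.Polynomial"
begin

text \<open>The subfield of elements fixed by x \<mapsto> x^q; for q = p^n inside an algebraically
closed field of characteristic p this is the finite field with p^n elements.\<close>
definition Fq :: "nat \<Rightarrow> 'a::field set" where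
  "Fq q = {x. x ^ q = x}"

definition on_fermat :: "nat \<Rightarrow> 'a::field^3 \<Rightarrow> bool" where
  "on_fermat p t \<longleftrightarrow> t \<noteq> 0 \<and> t$1 ^ (p+1) + t$2 ^ (p+1) + t$3 ^ (p+1) = 0"

definition rational_pt :: "nat \<Rightarrow> 'a::field^3 \<Rightarrow> bool" where
  "rational_pt p t \<longleftrightarrow> (\<exists>l. l \<noteq> 0 \<and> (\<forall>i. l * t$i \<in> Fq (p^2)))"

definition End_pt :: "nat \<Rightarrow> 'a::field^3 \<Rightarrow> ('a^3^3) set" where
  "End_pt p t = {A. (\<forall>i j. A$i$j \<in> Fq (p^2)) \<and> (\<exists>c. A *v t = c *s t)}"

text \<open>E (a set of matrices over F_{p^2}, with F_{p^2} embedded as scalar matrices) is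
isomorphic as F_{p^2}-algebra to the field F (containing F_{p^2}).\<close>
definition alg_iso :: "nat \<Rightarrow> ('a::field^3^3) set \<Rightarrow> 'a set \<Rightarrow> bool" where
  "alg_iso p E F \<longleftrightarrow> (\<exists>\<phi>. bij_betw \<phi> E F \<and>
      (\<forall>A\<in>E. \<forall>B\<in>E. \<phi> (A + B) = \<phi> A + \<phi> B \<and> \<phi> (A ** B) = \<phi> A * \<phi> B) \<and>
      (\<forall>c\<in>Fq (p^2). \<phi> (mat c) = c))"

end

theory Submission
  imports Defs "HOL-Computational_Algebra.Primes"
begin

text \<open>
  Write \<open>q = p\<^sup>2\<close>, \<open>\<sigma>\<close> for the coordinatewise \<open>q\<close>-th power and \<open>t\<^sup>p\<close> for the coordinatewise
  \<open>p\<close>-th power. The Fermat equation says \<open>t\<^sup>p \<bullet> t = 0\<close>, and its \<open>p\<close>-th power says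
  \<open>t\<^sup>p \<bullet> \<sigma> t = 0\<close>. Hence an \<open>F_q\<close>-rational linear form vanishing at \<open>t\<close> would be proportional
  to \<open>t\<^sup>p\<close>, which forces \<open>\<sigma> t \<parallel> t\<close>, i.e. \<open>t\<close> rational. So no \<open>F_q\<close>-rational line passes
  through \<open>t\<close>, and consequently \<open>t, \<sigma> t, \<sigma>\<^sup>2 t\<close> are linearly independent.

  Sending \<open>A \<in> End(t)\<close> to its eigenvalue \<open>c\<close> at \<open>t\<close> is an \<open>F_q\<close>-algebra homomorphism, injective
  because the rows of a matrix killing \<open>t\<close> are rational forms vanishing at \<open>t\<close>. As \<open>A\<close> is
  rational, \<open>\<sigma>\<^sup>i t\<close> is an eigenvector with eigenvalue \<open>c\<^bsup>q\<^sup>i\<^esup>\<close>; writing \<open>\<sigma>\<^sup>3 t\<close> in the basis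
  \<open>t, \<sigma> t, \<sigma>\<^sup>2 t\<close> gives \<open>c\<^bsup>q\<^sup>3\<^esup> = c\<close>, so the image lies in \<open>F_{q^3}\<close>. If it contains some
  \<open>c \<notin> F_q\<close>, Lagrange interpolation at \<open>c, c\<^sup>q, c\<^bsup>q\<^sup>2\<^esup>\<close> realises every element of \<open>F_{q^3}\<close> as
  the eigenvalue of a quadratic polynomial in \<open>A\<close> with coefficients in \<open>F_q\<close>.
\<close>

lemma vec3_eq_iff: "(x::'a^3) = y \<longleftrightarrow> x$1 = y$1 \<and> x$2 = y$2 \<and> x$3 = y$3"
  by (simp add: vec_eq_iff forall_3)

definition dot :: "'a::comm_ring_1^3 \<Rightarrow> 'a^3 \<Rightarrow> 'a" where
  "dot u v = u$1 * v$1 + u$2 * v$2 + u$3 * v$3"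

definition cross :: "'a::comm_ring_1^3 \<Rightarrow> 'a^3 \<Rightarrow> 'a^3" where
  "cross u v = vector [u$2 * v$3 - u$3 * v$2, u$3 * v$1 - u$1 * v$3, u$1 * v$2 - u$2 * v$1]"

lemma cross_nth [simp]:
  "cross u v $ 1 = u$2 * v$3 - u$3 * v$2"
  "cross u v $ 2 = u$3 * v$1 - u$1 * v$3"
  "cross u v $ 3 = u$1 * v$2 - u$2 * v$1"
  by (simp_all add: cross_def)

lemma matrix_vector_mult_nth_dot: "(A *v x) $ i = dot (A$i) x"
  by (simp add: matrix_vector_mult_def dot_def sum_3)

lemma dot_commute: "dot u v = dot v u"
  by (simp add: dot_def algebra_simps)

lemma dot_smult_left: "dot (c *s u) v = c * dot u v"
  by (simp add: dot_def algebra_simps)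

lemma dot_add_left: "dot (x + y) v = dot x v + dot y v"
  by (simp add: dot_def algebra_simps)

lemma dot_cross_self:
  "dot (cross u v) u = 0"
  "dot (cross u v) v = 0"
  by (simp_all add: dot_def algebra_simps)

lemma dot_cross_cyclic: "dot u (cross v w) = dot v (cross w u)"
  by (simp add: dot_def algebra_simps)

lemma cross_antisym: "cross u v = - cross v u"
  by (simp add: vec3_eq_iff algebra_simps)

lemma cross_smult_same: "cross (a *s u) (b *s u) = 0"
  by (simp add: vec3_eq_iff algebra_simps)

lemma cross_cross: "cross x (cross u v) = dot x v *s u - dot x u *s v"
  by (simp add: vec3_eq_iff dot_def algebra_simps)

lemma cramer3:
  "dot u (cross v w) *s x = dot x (cross v w) *s u + dot x (cross w u) *s v + dot x (cross u v) *s w"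
  by (simp add: vec3_eq_iff dot_def algebra_simps)

lemma parallel_if_cross_eq_0:
  fixes x w :: "'a::field^3"
  assumes "cross x w = 0" and "w \<noteq> 0"
  shows "\<exists>\<mu>. x = \<mu> *s w"
proof -
  from \<open>w \<noteq> 0\<close> obtain i where i: "w$i \<noteq> 0"
    by (metis vec_eq_iff zero_index)
  have "x$2 * w$3 = x$3 * w$2" "x$3 * w$1 = x$1 * w$3" "x$1 * w$2 = x$2 * w$1"
    using assms(1) by (simp_all add: vec3_eq_iff)
  with i have "x = (x$i / w$i) *s w"
    using exhaust_3[of i] by (auto simp: vec3_eq_iff field_simps)
  then show ?thesis ..
qed

lemma parallel_cross_if_orthogonal:
  fixes x :: "'a::field^3"
  assumes "dot x u = 0" and "dot x v = 0" and "cross u v \<noteq> 0"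
  shows "\<exists>\<mu>. x = \<mu> *s cross u v"
  using parallel_if_cross_eq_0[OF _ assms(3)] assms(1,2) by (simp add: cross_cross)

subsection \<open>Frobenius maps\<close>

lemma Fq_mult: "x \<in> Fq m \<Longrightarrow> y \<in> Fq m \<Longrightarrow> (x * y :: 'a::field) \<in> Fq m"
  by (simp add: Fq_def power_mult_distrib)

lemma Fq_power_cube_iff: "(x::'a::field) \<in> Fq (q ^ 3) \<longleftrightarrow> ((x ^ q) ^ q) ^ q = x"
  by (simp add: Fq_def numeral_3_eq_3 mult.assoc flip: power_mult)

context
  fixes m n :: nat
  assumes prime_char: "prime CHAR('a::field)" and m_eq: "m = CHAR('a) ^ n"
begin

lemma frobenius_minus: "(- x :: 'a) ^ m = - (x ^ m)"
proof -
  have "(x + - x) ^ m = x ^ m + (- x) ^ m"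
    by (rule freshmans_dream'[OF prime_char m_eq])
  moreover have "m > 0"
    using prime_char m_eq by (simp add: prime_gt_0_nat)
  ultimately show ?thesis
    by (simp add: power_0_left eq_neg_iff_add_eq_0 add.commute)
qed

lemma frobenius_diff: "(x - y :: 'a) ^ m = x ^ m - y ^ m"
  using freshmans_dream'[OF prime_char m_eq, of x "- y"] frobenius_minus[of y] by simp

lemma Fq_add: "x \<in> Fq m \<Longrightarrow> y \<in> Fq m \<Longrightarrow> (x + y :: 'a) \<in> Fq m"
  by (simp add: Fq_def freshmans_dream'[OF prime_char m_eq])

lemma Fq_diff: "x \<in> Fq m \<Longrightarrow> y \<in> Fq m \<Longrightarrow> (x - y :: 'a) \<in> Fq m"
  by (simp add: Fq_def frobenius_diff)

lemma Fq_sum: "(\<And>i. i \<in> S \<Longrightarrow> f i \<in> Fq m) \<Longrightarrow> (sum f S :: 'a) \<in> Fq m"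
  by (simp add: Fq_def freshmans_dream_sum'[OF prime_char m_eq])

lemma frobenius_inj: "(x :: 'a) ^ m = y ^ m \<Longrightarrow> x = y"
  using frobenius_diff[of x y] by simp

text \<open>Lagrange interpolation at the conjugates \<open>c, c\<^sup>m, c\<^bsup>m\<^sup>2\<^esup>\<close>: Frobenius permutes the three
  Lagrange coefficients cyclically, so the coefficients of the interpolating quadratic are fixed.\<close>

lemma Fq_quadratic_interpolation:
  fixes c d :: 'a
  assumes c: "c \<in> Fq (m ^ 3)" "c \<notin> Fq m" and d: "d \<in> Fq (m ^ 3)"
  shows "\<exists>a b g. a \<in> Fq m \<and> b \<in> Fq m \<and> g \<in> Fq m \<and> a + b * c + g * c ^ 2 = d"
proof -
  define c1 c2 d1 d2 where "c1 = c ^ m" "c2 = c1 ^ m" "d1 = d ^ m" "d2 = d1 ^ m"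
  have c2_pow: "c2 ^ m = c" and d2_pow: "d2 ^ m = d"
    using c(1) d by (simp_all add: Fq_power_cube_iff c1_c2_d1_d2_def)
  have "c \<noteq> c1"
    using c(2) by (simp add: Fq_def c1_c2_d1_d2_def)
  moreover have "c1 \<noteq> c2"
    using \<open>c \<noteq> c1\<close> frobenius_inj[of c c1] by (auto simp: c1_c2_d1_d2_def)
  moreover have "c \<noteq> c2"
    using c(2) c2_pow by (auto simp: Fq_def)
  ultimately have nonzero: "(c - c1) * (c - c2) \<noteq> 0"
    by simp
  define e0 e1 e2 where
    "e0 = d / ((c - c1) * (c - c2))" "e1 = d1 / ((c1 - c2) * (c1 - c))"
    "e2 = d2 / ((c2 - c) * (c2 - c1))"
  note frob = freshmans_dream'[OF prime_char m_eq] frobenius_diff frobenius_minus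
    power_mult_distrib power_divide
  have e_pow: "e0 ^ m = e1" "e1 ^ m = e2" "e2 ^ m = e0"
    unfolding e0_e1_e2_def
    by (simp_all add: frob c2_pow d2_pow flip: c1_c2_d1_d2_def)
  define a b g where
    "a = e0 * c1 * c2 + e1 * c2 * c + e2 * c * c1"
    "b = - (e0 * (c1 + c2) + e1 * (c2 + c) + e2 * (c + c1))"
    "g = e0 + e1 + e2"
  have "a \<in> Fq m" "b \<in> Fq m" "g \<in> Fq m"
    unfolding Fq_def a_b_g_def
    by (simp_all add: frob e_pow c2_pow flip: c1_c2_d1_d2_def)
  moreover have "a + b * c + g * c ^ 2 = e0 * ((c - c1) * (c - c2))"
    unfolding a_b_g_def by (simp add: power2_eq_square algebra_simps)
  ultimately show ?thesis
    using nonzero by (auto simp: e0_e1_e2_def)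
qed

end

definition vec_pow :: "nat \<Rightarrow> 'a::monoid_mult^'n \<Rightarrow> 'a^'n" where
  "vec_pow m v = (\<chi> i. v$i ^ m)"

lemma vec_pow_nth [simp]: "vec_pow m v $ i = v$i ^ m"
  by (simp add: vec_pow_def)

lemma vec_pow_smult: "vec_pow m (c *s v) = c ^ m *s vec_pow m (v::'a::comm_monoid_mult^'n)"
  by (simp add: vec_eq_iff power_mult_distrib)

lemma vec_pow_eq_0_iff: "m > 0 \<Longrightarrow> vec_pow m v = 0 \<longleftrightarrow> v = (0::'a::semiring_1_no_zero_divisors^'n)"
  by (simp add: vec_eq_iff)

lemma vec_pow_vec_pow: "vec_pow m (vec_pow n v) = vec_pow (n * m) v"
  by (simp add: vec_eq_iff power_mult)

definition Fq_matrix :: "nat \<Rightarrow> 'a::field^'n^'m \<Rightarrow> bool" where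
  "Fq_matrix q A \<longleftrightarrow> (\<forall>i j. A$i$j \<in> Fq q)"

lemma mat_mult_vector: "mat c *v x = c *s (x::'a::semiring_1^'n)"
  by (vector matrix_vector_mult_def mat_def) (simp add: if_distrib if_distribR cong del: if_weak_cong)

lemma matrix_vector_mult_smult: "A *v (c *s x) = c *s (A *v (x::'a::comm_semiring_1^'n))"
  by (vector matrix_vector_mult_def sum_distrib_left algebra_simps)

lemma quadratic_matrix_eigenvector:
  fixes A :: "'a::comm_semiring_1^'n^'n"
  assumes "A *v x = c *s x"
  shows "(mat a + mat b ** A + mat g ** (A ** A)) *v x = (a + b * c + g * c ^ 2) *s x"
  using assms
  by (simp add: matrix_vector_mult_add_rdistrib mat_mult_vector matrix_vector_mult_smult
      power2_eq_square vector_sadd_rdistrib vector_smult_assoc mult_ac flip: matrix_vector_mul_assoc)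

context
  fixes m n :: nat
  assumes prime_char: "prime CHAR('a::field)" and m_eq: "m = CHAR('a) ^ n"
begin

lemma Fq_matrix_add: "Fq_matrix m A \<Longrightarrow> Fq_matrix m B \<Longrightarrow> Fq_matrix m (A + B :: 'a^'n^'k)"
  by (simp add: Fq_matrix_def Fq_add[OF prime_char m_eq])

lemma Fq_matrix_diff: "Fq_matrix m A \<Longrightarrow> Fq_matrix m B \<Longrightarrow> Fq_matrix m (A - B :: 'a^'n^'k)"
  by (simp add: Fq_matrix_def Fq_diff[OF prime_char m_eq])

lemma Fq_matrix_mult:
  "Fq_matrix m A \<Longrightarrow> Fq_matrix m B \<Longrightarrow> Fq_matrix m (A ** B :: 'a^'l^'k)"
  unfolding Fq_matrix_def matrix_matrix_mult_def
  by (auto intro!: Fq_sum[OF prime_char m_eq] Fq_mult)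

lemma Fq_matrix_mat: "c \<in> Fq m \<Longrightarrow> Fq_matrix m (mat c :: 'a^'k^'k)"
  using prime_char m_eq by (simp add: Fq_matrix_def mat_def Fq_def prime_gt_0_nat)

lemma vec_pow_matrix_vector_mult:
  "Fq_matrix m A \<Longrightarrow> vec_pow m (A *v x) = A *v vec_pow m (x::'a^'k)"
  by (simp add: Fq_matrix_def Fq_def vec_eq_iff matrix_vector_mult_def power_mult_distrib
      freshmans_dream_sum'[OF prime_char m_eq])

lemma Fq_matrix_eigenvector_vec_pow:
  "Fq_matrix m A \<Longrightarrow> A *v x = c *s x \<Longrightarrow> A *v vec_pow m x = c ^ m *s vec_pow m (x::'a^'k)"
  by (metis vec_pow_matrix_vector_mult vec_pow_smult)

lemma vec_pow_cross: "vec_pow m (cross u v) = cross (vec_pow m u) (vec_pow m (v::'a^3))"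
  by (simp add: vec3_eq_iff frobenius_diff[OF prime_char m_eq] power_mult_distrib)

lemma dot_vec_pow: "dot (vec_pow m u) (vec_pow m v) = dot u (v::'a^3) ^ m"
  by (simp add: dot_def freshmans_dream'[OF prime_char m_eq] power_mult_distrib)

lemma rational_if_vec_pow_eigenvector:
  fixes u :: "'a^'k"
  assumes "u \<noteq> 0" and "vec_pow m u = \<mu> *s u"
  shows "\<exists>l. l \<noteq> 0 \<and> (\<forall>i. l * u$i \<in> Fq m)"
proof -
  from \<open>u \<noteq> 0\<close> obtain i where i: "u$i \<noteq> 0"
    by (metis vec_eq_iff zero_index)
  have u_pow: "u$j ^ m = \<mu> * u$j" for j
    using assms(2) by (metis vec_pow_nth vector_smult_component)
  have "m > 0"
    using prime_char m_eq by (simp add: prime_gt_0_nat)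
  with i u_pow[of i] have "\<mu> \<noteq> 0"
    by auto
  with i have "inverse (u$i) * u$j \<in> Fq m" for j
    by (simp add: Fq_def power_mult_distrib power_inverse u_pow field_simps)
  with i show ?thesis
    by (intro exI[of _ "inverse (u$i)"]) simp
qed

end

subsection \<open>Points of the Fermat curve\<close>

lemma on_fermat_polar: "on_fermat p t \<Longrightarrow> dot (vec_pow p t) t = 0"
  by (simp add: on_fermat_def dot_def power_Suc2 mult.commute)

text \<open>If \<open>t \<times> \<sigma> t \<noteq> 0\<close>, both \<open>a\<close> and \<open>t\<^sup>p\<close> are proportional to it, being orthogonal to \<open>t\<close>
  and \<open>\<sigma> t\<close>; but then \<open>(t \<times> \<sigma> t)\<^sup>p = t\<^sup>p \<times> \<sigma> (t\<^sup>p)\<close> vanishes because \<open>\<sigma> a = a\<close>.\<close>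

lemma fermat_point_on_rational_line:
  fixes t a :: "'a::field^3"
  assumes prime_char: "prime CHAR('a)" and p_eq: "p = CHAR('a)"
    and fermat: "on_fermat p t"
    and "a \<noteq> 0" and a_rational: "\<forall>i. a$i \<in> Fq (p^2)" and "dot a t = 0"
  shows "cross t (vec_pow (p^2) t) = 0"
proof (rule ccontr)
  let ?\<sigma> = "vec_pow (p^2)"
  have char_p: "p = CHAR('a) ^ 1" and char_q: "p^2 = CHAR('a) ^ 2"
    using p_eq by simp_all
  have "p > 0"
    using prime_char p_eq by (simp add: prime_gt_0_nat)
  define w where "w = cross t (?\<sigma> t)"
  assume "cross t (?\<sigma> t) \<noteq> 0"
  then have "w \<noteq> 0"
    by (simp add: w_def)
  have \<sigma>_a: "?\<sigma> a = a"
    using a_rational by (simp add: vec_eq_iff Fq_def)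
  have "dot a (?\<sigma> t) = 0"
    using dot_vec_pow[OF prime_char char_q, of a t] \<sigma>_a \<open>dot a t = 0\<close> \<open>p > 0\<close> by simp
  then obtain \<mu> where \<mu>: "a = \<mu> *s w"
    using parallel_cross_if_orthogonal[OF \<open>dot a t = 0\<close>] \<open>w \<noteq> 0\<close> by (auto simp: w_def)
  have \<sigma>_eq: "?\<sigma> v = vec_pow p (vec_pow p v)" for v :: "'a^3"
    by (simp add: vec_pow_vec_pow power2_eq_square)
  have polar: "dot (vec_pow p t) t = 0"
    using fermat by (rule on_fermat_polar)
  then have "dot (vec_pow p t) (?\<sigma> t) = 0"
    unfolding \<sigma>_eq dot_vec_pow[OF prime_char char_p] using \<open>p > 0\<close> by (simp add: dot_commute)
  then obtain \<nu> where \<nu>: "vec_pow p t = \<nu> *s w"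
    using parallel_cross_if_orthogonal[OF polar] \<open>w \<noteq> 0\<close> by (auto simp: w_def)
  have "\<mu> \<noteq> 0"
    using \<open>a \<noteq> 0\<close> \<mu> by auto
  then have t_p: "vec_pow p t = (\<nu> / \<mu>) *s a"
    using \<mu> \<nu> by (simp add: vec_eq_iff)
  have "vec_pow p w = cross (vec_pow p t) (?\<sigma> (vec_pow p t))"
    by (simp add: w_def vec_pow_cross[OF prime_char char_p] vec_pow_vec_pow mult.commute)
  also have "\<dots> = 0"
    unfolding t_p vec_pow_smult \<sigma>_a by (rule cross_smult_same)
  finally show False
    using \<open>w \<noteq> 0\<close> vec_pow_eq_0_iff[OF \<open>p > 0\<close>] by blast
qed

subsection \<open>The eigenvalue map on \<open>End(t)\<close>\<close>

locale fermat_nonrational_point =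
  fixes p :: nat and t :: "'k::field^3"
  assumes prime_p: "prime p" and char_eq: "CHAR('k) = p"
    and fermat: "on_fermat p t" and nonrational: "\<not> rational_pt p t"
begin

abbreviation q :: nat where
  "q \<equiv> p^2"

abbreviation \<sigma> :: "'k^3 \<Rightarrow> 'k^3" where
  "\<sigma> \<equiv> vec_pow q"

lemma prime_char: "prime CHAR('k)"
  using prime_p char_eq by simp

lemma char_q: "p^2 = CHAR('k) ^ 2"
  using char_eq by simp

lemma q_pos: "p^2 > 0"
  using prime_p by (simp add: prime_gt_0_nat)

lemma t_nonzero: "t \<noteq> 0"
  using fermat by (simp add: on_fermat_def)

lemma cross_frobenius_nonzero: "cross t (\<sigma> t) \<noteq> 0"
proof
  assume "cross t (\<sigma> t) = 0"
  then have "cross (\<sigma> t) t = 0"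
    using cross_antisym[of t "\<sigma> t"] by simp
  then obtain \<mu> where "\<sigma> t = \<mu> *s t"
    using parallel_if_cross_eq_0 t_nonzero by blast
  from rational_if_vec_pow_eigenvector[OF prime_char char_q t_nonzero this] nonrational
  show False
    by (simp add: rational_pt_def)
qed

lemma rational_form_vanishing_at_t: "\<forall>i. a$i \<in> Fq (p^2) \<Longrightarrow> dot a t = 0 \<Longrightarrow> a = 0"
  using fermat_point_on_rational_line[OF prime_char char_eq[symmetric] fermat, of a]
    cross_frobenius_nonzero by blast

text \<open>Otherwise \<open>w = t \<times> \<sigma> t\<close> and \<open>\<sigma> w\<close> are both orthogonal to \<open>\<sigma> t\<close> and \<open>\<sigma>\<^sup>2 t\<close>, so \<open>w\<close> is an
  eigenvector of \<open>\<sigma>\<close>, i.e. (up to a scalar) a rational linear form vanishing at \<open>t\<close>.\<close>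

lemma frobenius_orbit_independent: "dot t (cross (\<sigma> t) (\<sigma> (\<sigma> t))) \<noteq> 0"
proof
  assume det: "dot t (cross (\<sigma> t) (\<sigma> (\<sigma> t))) = 0"
  define w where "w = cross t (\<sigma> t)"
  have "w \<noteq> 0"
    using cross_frobenius_nonzero by (simp add: w_def)
  have \<sigma>_w: "\<sigma> w = cross (\<sigma> t) (\<sigma> (\<sigma> t))"
    unfolding w_def by (rule vec_pow_cross[OF prime_char char_q])
  then have "\<sigma> w \<noteq> 0"
    using \<open>w \<noteq> 0\<close> vec_pow_eq_0_iff[OF q_pos] by metis
  have "dot w (\<sigma> t) = 0"
    unfolding w_def by (rule dot_cross_self(2))
  moreover have "dot w (\<sigma> (\<sigma> t)) = 0"
    using det unfolding w_def by (metis dot_commute dot_cross_cyclic)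
  ultimately obtain \<mu> where \<mu>: "w = \<mu> *s \<sigma> w"
    using parallel_cross_if_orthogonal \<sigma>_w \<open>\<sigma> w \<noteq> 0\<close> by metis
  with \<open>w \<noteq> 0\<close> have "\<mu> \<noteq> 0"
    by auto
  with \<mu> have "\<sigma> w = inverse \<mu> *s w"
    by (metis vector_smult_assoc vector_smult_lid left_inverse)
  from rational_if_vec_pow_eigenvector[OF prime_char char_q \<open>w \<noteq> 0\<close> this]
  obtain l where "l \<noteq> 0" and "\<forall>i. l * w$i \<in> Fq (p^2)"
    by blast
  moreover have "dot (l *s w) t = 0"
    by (simp add: dot_smult_left w_def dot_cross_self)
  ultimately have "l *s w = 0"
    using rational_form_vanishing_at_t[of "l *s w"] by simp
  with \<open>l \<noteq> 0\<close> \<open>w \<noteq> 0\<close> show False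
    by (simp add: vec_eq_iff)
qed

text \<open>The vectors \<open>\<sigma>\<^sup>i t\<close> are eigenvectors of \<open>A\<close> with eigenvalues \<open>c\<^bsup>q\<^sup>i\<^esup>\<close>. Expanding \<open>\<sigma>\<^sup>3 t\<close>
  in the basis \<open>t, \<sigma> t, \<sigma>\<^sup>2 t\<close>, applying \<open>A\<close> and pairing with \<open>\<sigma> t \<times> \<sigma>\<^sup>2 t\<close> isolates the
  \<open>t\<close>-coefficient, which is \<open>D\<^sup>q \<noteq> 0\<close> for the determinant \<open>D\<close> of the basis.\<close>

lemma eigenvalue_in_Fq_cube:
  assumes A: "Fq_matrix q A" and "A *v t = c *s t"
  shows "c \<in> Fq (q^3)"
proof -
  define t1 t2 t3 where "t1 = \<sigma> t" "t2 = \<sigma> t1" "t3 = \<sigma> t2"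
  define n where "n = cross t1 t2"
  define D where "D = dot t n"
  note eigen = Fq_matrix_eigenvector_vec_pow[OF prime_char char_q A]
  have e1: "A *v t1 = c ^ q *s t1"
    using eigen[OF \<open>A *v t = c *s t\<close>] by (simp add: t1_t2_t3_def)
  have e2: "A *v t2 = (c ^ q) ^ q *s t2"
    using eigen[OF e1] by (simp add: t1_t2_t3_def)
  have e3: "A *v t3 = ((c ^ q) ^ q) ^ q *s t3"
    using eigen[OF e2] by (simp add: t1_t2_t3_def)
  have "D \<noteq> 0"
    using frobenius_orbit_independent by (simp add: D_def n_def t1_t2_t3_def)
  have "dot t3 n = dot (\<sigma> t2) (\<sigma> (cross t t1))"
    by (simp add: n_def t1_t2_t3_def vec_pow_cross[OF prime_char char_q])
  also have "\<dots> = D ^ q"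
    unfolding dot_vec_pow[OF prime_char char_q] D_def n_def by (metis dot_cross_cyclic)
  finally have "dot t3 n \<noteq> 0"
    using \<open>D \<noteq> 0\<close> by simp
  have "dot (A *v (D *s t3)) n = D * ((c ^ q) ^ q) ^ q * dot t3 n"
    by (simp add: matrix_vector_mult_smult e3 dot_smult_left)
  moreover have "D *s t3 = dot t3 (cross t1 t2) *s t + dot t3 (cross t2 t) *s t1 + dot t3 (cross t t1) *s t2"
    unfolding D_def n_def by (rule cramer3)
  then have "dot (A *v (D *s t3)) n = dot t3 n * c * D"
    by (simp add: matrix_vector_right_distrib matrix_vector_mult_smult \<open>A *v t = c *s t\<close> e1 e2
        dot_add_left dot_smult_left D_def n_def dot_commute[of t1] dot_commute[of t2] dot_cross_self)
  ultimately have "((c ^ q) ^ q) ^ q = c"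
    using \<open>dot t3 n \<noteq> 0\<close> \<open>D \<noteq> 0\<close> by simp
  then show ?thesis
    by (simp only: Fq_power_cube_iff)
qed

lemma End_pt_iff: "A \<in> End_pt p t \<longleftrightarrow> Fq_matrix q A \<and> (\<exists>c. A *v t = c *s t)"
  by (simp add: End_pt_def Fq_matrix_def)

definition eigenvalue :: "'k^3^3 \<Rightarrow> 'k" where
  "eigenvalue A = (THE c. A *v t = c *s t)"

lemma eigenvalue_eqI:
  assumes "A *v t = c *s t"
  shows "eigenvalue A = c"
  unfolding eigenvalue_def
proof (rule the_equality)
  show "A *v t = c *s t"
    by (rule assms)
  fix c' assume "A *v t = c' *s t"
  obtain i where "t$i \<noteq> 0"
    using t_nonzero by (metis vec_eq_iff zero_index)
  with assms \<open>A *v t = c' *s t\<close> show "c' = c"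
    by (metis mult_right_cancel vector_smult_component)
qed

lemma End_pt_eigenvector: "A \<in> End_pt p t \<Longrightarrow> A *v t = eigenvalue A *s t"
  using eigenvalue_eqI by (auto simp: End_pt_iff)

lemma eigenvalue_add:
  "A \<in> End_pt p t \<Longrightarrow> B \<in> End_pt p t \<Longrightarrow> eigenvalue (A + B) = eigenvalue A + eigenvalue B"
  by (rule eigenvalue_eqI) (simp add: matrix_vector_mult_add_rdistrib End_pt_eigenvector vector_sadd_rdistrib)

lemma eigenvalue_mult:
  "A \<in> End_pt p t \<Longrightarrow> B \<in> End_pt p t \<Longrightarrow> eigenvalue (A ** B) = eigenvalue A * eigenvalue B"
  by (rule eigenvalue_eqI)
    (simp add: End_pt_eigenvector matrix_vector_mult_smult vector_smult_assoc mult.commute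
      flip: matrix_vector_mul_assoc)

lemma eigenvalue_mat: "eigenvalue (mat c) = c"
  by (rule eigenvalue_eqI) (simp add: mat_mult_vector)

lemma mat_in_End_pt: "c \<in> Fq q \<Longrightarrow> mat c \<in> End_pt p t"
  by (auto simp: End_pt_iff Fq_matrix_mat[OF prime_char char_q] mat_mult_vector)

lemma inj_on_eigenvalue: "inj_on eigenvalue (End_pt p t)"
proof (rule inj_onI)
  fix A B assume A: "A \<in> End_pt p t" and B: "B \<in> End_pt p t"
    and "eigenvalue A = eigenvalue B"
  then have "(A - B) *v t = 0"
    by (simp add: matrix_vector_mult_diff_rdistrib End_pt_eigenvector)
  moreover have "Fq_matrix q (A - B)"
    using A B by (simp add: End_pt_iff Fq_matrix_diff[OF prime_char char_q])
  ultimately have "(A - B)$i = 0" for i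
    using rational_form_vanishing_at_t[of "(A - B)$i"]
    by (metis Fq_matrix_def matrix_vector_mult_nth_dot zero_index)
  then show "A = B"
    by (simp add: vec_eq_iff)
qed

lemma alg_iso_if_eigenvalue_image:
  "eigenvalue ` End_pt p t = F \<Longrightarrow> alg_iso p (End_pt p t) F"
  unfolding alg_iso_def
  by (intro exI[of _ eigenvalue] conjI ballI)
    (auto simp: bij_betw_def inj_on_eigenvalue eigenvalue_add eigenvalue_mult eigenvalue_mat)

lemma Fq_subset_eigenvalue_image: "Fq q \<subseteq> eigenvalue ` End_pt p t"
  using mat_in_End_pt eigenvalue_mat by (metis image_eqI subsetI)

lemma eigenvalue_image_subset_Fq_cube: "eigenvalue ` End_pt p t \<subseteq> Fq (q^3)"
  using eigenvalue_in_Fq_cube End_pt_eigenvector by (auto simp: End_pt_iff)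

lemma Fq_cube_subset_eigenvalue_image:
  assumes "A \<in> End_pt p t" and "eigenvalue A \<notin> Fq q"
  shows "Fq (q^3) \<subseteq> eigenvalue ` End_pt p t"
proof
  fix d :: 'k assume "d \<in> Fq (q^3)"
  moreover have "eigenvalue A \<in> Fq (q^3)"
    using assms(1) eigenvalue_image_subset_Fq_cube by blast
  ultimately obtain a b g where abg: "a \<in> Fq q" "b \<in> Fq q" "g \<in> Fq q"
    and d: "a + b * eigenvalue A + g * eigenvalue A ^ 2 = d"
    using Fq_quadratic_interpolation[OF prime_char char_q] assms(2) by blast
  define B where "B = mat a + mat b ** A + mat g ** (A ** A)"
  have "Fq_matrix q A"
    using assms(1) by (simp add: End_pt_iff)
  then have "Fq_matrix q B"
    using abg
    by (simp add: B_def Fq_matrix_add[OF prime_char char_q] Fq_matrix_mult[OF prime_char char_q]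
        Fq_matrix_mat[OF prime_char char_q])
  moreover have "B *v t = d *s t"
    unfolding B_def d[symmetric]
    by (rule quadratic_matrix_eigenvector[OF End_pt_eigenvector[OF assms(1)]])
  ultimately show "d \<in> eigenvalue ` End_pt p t"
    by (metis End_pt_iff eigenvalue_eqI image_eqI)
qed

end

theorem lemma3p12:
  fixes t :: "'k::alg_closed_field ^ 3" and p :: nat
  assumes "prime p" and "CHAR('k) = p"
    and "on_fermat p t" and "\<not> rational_pt p t"
  shows "alg_iso p (End_pt p t) (Fq (p^2)) \<or> alg_iso p (End_pt p t) (Fq (p^6))"
proof -
  interpret fermat_nonrational_point p t
    using assms by (rule fermat_nonrational_point.intro)
  show ?thesis
  proof (cases "\<forall>A\<in>End_pt p t. eigenvalue A \<in> Fq q")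
    case True
    then have "eigenvalue ` End_pt p t = Fq q"
      using Fq_subset_eigenvalue_image by auto
    then show ?thesis
      by (simp add: alg_iso_if_eigenvalue_image)
  next
    case False
    then obtain A where "A \<in> End_pt p t" and "eigenvalue A \<notin> Fq q"
      by blast
    then have "eigenvalue ` End_pt p t = Fq (q^3)"
      by (intro equalityI eigenvalue_image_subset_Fq_cube Fq_cube_subset_eigenvalue_image)
    then show ?thesis
      by (simp add: alg_iso_if_eigenvalue_image flip: power_mult)
  qed
qed

end
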